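(* Let $a>0$ and $k\in\mathbb{N}^*$. For all $m\in\{0,\dots,k-1\}$ and $\ell\in\{0,\dots,k-1\}$, $$\frac{1}{n^m}\frac{d^m}{dx^m}\Big(F_{n,\ell}(a;x)-F_{n,\ell+1}(a;x)\Big)\Big|_{x=a}\xrightarrow[n\to\infty]{}(-1)^\ell\binom m\ell,$$ with $\binom m\ell=0$ when $\ell>m$.
   Context: $f(y)=e^{-y}\mathbb 1_{y\ge0}$, $F(y)=(1-e^{-y})\mathbb 1_{y\ge0}$, $f(y;x)=\frac{f(y)}{1-F(x)}\mathbb 1_{y\ge x}$, $F(y;x)=\frac{F(y)-F(x)}{1-F(x)}\mathbb 1_{y\ge x}$, $f_{n,\ell}(y;x)=\ell\binom n\ell F(y;x)^{\ell-1}f(y;x)(1-F(y;x))^{n-\ell}$ (density of the $\ell$-th order statistic of $n$ i.i.d. variables with law $\mathcal{E}(1)$ conditioned on exceeding $x$), $F_{n,\ell}(y;x)=\int_x^y f_{n,\ell}(z;x)dz$ for $\ell\ge1$, and $F_{n,0}(y;x)=\mathbb 1_{y\ge x}$. Derivatives in $x$ at $x=a$ are left derivatives. *)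

theory Defs
  imports "HOL-Analysis.Analysis"
begin

definition expf :: "real \<Rightarrow> real" where
  "expf y = (if y \<ge> 0 then exp (- y) else 0)"

definition expF :: "real \<Rightarrow> real" where
  "expF y = (if y \<ge> 0 then 1 - exp (- y) else 0)"

definition condf :: "real \<Rightarrow> real \<Rightarrow> real" where
  "condf y x = (if y \<ge> x then expf y / (1 - expF x) else 0)"

definition condF :: "real \<Rightarrow> real \<Rightarrow> real" where
  "condF y x = (if y \<ge> x then (expF y - expF x) / (1 - expF x) else 0)"

definition osf :: "nat \<Rightarrow> nat \<Rightarrow> real \<Rightarrow> real \<Rightarrow> real" where
  "osf n l y x = real l * real (n choose l) * condF y x ^ (l - 1) * condf y x
                 * (1 - condF y x) ^ (n - l)"

definition osF :: "nat \<Rightarrow> nat \<Rightarrow> real \<Rightarrow> real \<Rightarrow> real" where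
  "osF n l y x = (if l = 0 then (if y \<ge> x then 1 else 0)
                  else integral {x..y} (\<lambda>z. osf n l z x))"

fun left_deriv_n :: "nat \<Rightarrow> (real \<Rightarrow> real) \<Rightarrow> real \<Rightarrow> real" where
  "left_deriv_n 0 f = f"
| "left_deriv_n (Suc m) f =
     (\<lambda>x. THE D. (left_deriv_n m f has_real_derivative D) (at x within {..x}))"

end

theory Submission
  imports Defs
begin

(* For 0 <= x <= a, F_{n,l}(a;x) - F_{n,l+1}(a;x) is the probability
   P_l(x) = C(n,l) (e^(a-x) - 1)^l e^(n(x-a)) that exactly l of the n samples lie below a.
   The span of P_0, ..., P_l is closed under d/dx, which acts by
   P_j' = (n-j) P_j - (n-j+1) P_(j-1), and P_j(a) = [j = 0]. So the quantity in question is
   the 0-th coefficient after m applications of a bidiagonal matrix, divided by n^m; after this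
   scaling the matrix tends to 1 - shift, whose m-th power yields the signed binomial
   coefficients by Pascal's rule. *)

lemma left_deriv_n_SucI:
  assumes "(left_deriv_n m f has_real_derivative D) (at x within {..x})"
  shows "left_deriv_n (Suc m) f x = D"
proof -
  have "at x within {..<x} \<le> at x within {..x}"
    by (intro at_le) auto
  then have nontrivial: "at x within {..x} \<noteq> bot"
    using trivial_limit_at_left_real bot_unique by metis
  show ?thesis
    unfolding left_deriv_n.simps
  proof (rule the_equality)
    show "D' = D" if "(left_deriv_n m f has_real_derivative D') (at x within {..x})" for D'
      using has_field_derivative_unique[OF that assms nontrivial] .
  qed (fact assms)
qed

lemma left_deriv_n_linear_family:
  assumes "\<And>c x. (\<Phi> c has_real_derivative \<Phi> (T c) x) (at x)"
  shows "left_deriv_n m (\<Phi> c) = \<Phi> ((T ^^ m) c)"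
proof (induction m)
  case (Suc m)
  show ?case
    by (rule ext, rule left_deriv_n_SucI) (simp add: Suc has_field_derivative_at_within assms)
qed simp

lemma left_deriv_n_cong:
  assumes "\<And>y. y \<in> {b<..a} \<Longrightarrow> f y = g y" and "x \<in> {b<..a}"
  shows "left_deriv_n m f x = left_deriv_n m g x"
  using assms(2)
proof (induction m arbitrary: x)
  case (Suc m)
  have "(left_deriv_n m f has_real_derivative D) (at x within {..x}) \<longleftrightarrow>
        (left_deriv_n m g has_real_derivative D) (at x within {..x})" for D
  proof (rule has_field_derivative_cong_eventually)
    show "\<forall>\<^sub>F y in at x within {..x}. left_deriv_n m f y = left_deriv_n m g y"
      unfolding eventually_at_filter
      using eventually_nhds_in_open[of "{b<..}" x] Suc
      by (auto elim!: eventually_mono)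
  qed (use Suc in simp)
  then show ?case by simp
qed (use assms in simp)

definition prob_exactly_below :: "nat \<Rightarrow> nat \<Rightarrow> real \<Rightarrow> real \<Rightarrow> real" where
  "prob_exactly_below n j a x = real (n choose j) * (1 - exp (x - a)) ^ j * exp (x - a) ^ (n - j)"

lemma of_nat_Suc_mult_choose_Suc:
  "real (Suc j) * real (n choose Suc j) = (real n - real j) * real (n choose j)"
proof (cases "j < n")
  case True
  have "Suc j * (n choose Suc j) = (n - j) * (n choose j)"
    by (metis binomial_absorb_comp binomial_absorption)
  then show ?thesis
    using True by (metis of_nat_diff of_nat_mult less_imp_le)
next
  case False
  then consider "j = n" | "n < j" by linarith
  then show ?thesis by cases (simp_all add: binomial_eq_0)
qed

lemma prob_exactly_below_alt:
  "prob_exactly_below n j a x = real (n choose j) * (exp (a - x) - 1) ^ j * exp (real n * (x - a))"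
proof (cases "j \<le> n")
  case True
  have "1 - exp (x - a) = (exp (a - x) - 1) * exp (x - a)"
    by (simp add: algebra_simps flip: exp_add)
  then have "(1 - exp (x - a)) ^ j * exp (x - a) ^ (n - j)
      = (exp (a - x) - 1) ^ j * exp (x - a) ^ (j + (n - j))"
    by (simp add: power_mult_distrib power_add)
  also have "exp (x - a) ^ (j + (n - j)) = exp (real n * (x - a))"
    using True by (simp flip: exp_of_nat_mult)
  finally show ?thesis
    unfolding prob_exactly_below_def by simp
qed (simp add: prob_exactly_below_def)

lemma prob_exactly_below_same: "prob_exactly_below n j a a = (if j = 0 then 1 else 0)"
  by (simp add: prob_exactly_below_def)

lemma has_real_derivative_prob_exactly_below:
  "((\<lambda>x. prob_exactly_below n j a x) has_real_derivative
      (real n - real j) * prob_exactly_below n j a x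
      - (if j = 0 then 0 else (real n - real (j - 1)) * prob_exactly_below n (j - 1) a x)) (at x)"
proof (cases j)
  case 0
  show ?thesis
    unfolding prob_exactly_below_alt 0
    by (auto intro!: derivative_eq_intros simp: algebra_simps)
next
  case (Suc i)
  have "((\<lambda>x. (exp (a - x) - 1) ^ Suc i * exp (real n * (x - a))) has_real_derivative
      (real n - real (Suc i)) * ((exp (a - x) - 1) ^ Suc i * exp (real n * (x - a)))
      - real (Suc i) * ((exp (a - x) - 1) ^ i * exp (real n * (x - a)))) (at x)"
    by (rule derivative_eq_intros refl | simp)+ (simp add: algebra_simps)
  then have "((\<lambda>x. real (n choose Suc i) * ((exp (a - x) - 1) ^ Suc i * exp (real n * (x - a))))
      has_real_derivative
      (real n - real (Suc i)) * (real (n choose Suc i) * (exp (a - x) - 1) ^ Suc i * exp (real n * (x - a)))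
      - (real (Suc i) * real (n choose Suc i)) * ((exp (a - x) - 1) ^ i * exp (real n * (x - a)))) (at x)"
    by (rule DERIV_cmult[THEN DERIV_cong]) (simp add: algebra_simps)
  then show ?thesis
    unfolding Suc of_nat_Suc_mult_choose_Suc by (simp add: prob_exactly_below_alt mult.assoc)
qed

lemma condf_eq_exp: "0 \<le> x \<Longrightarrow> x \<le> z \<Longrightarrow> condf z x = exp (x - z)"
  by (simp add: condf_def expf_def expF_def flip: exp_diff)

lemma condF_eq_exp: "0 \<le> x \<Longrightarrow> x \<le> z \<Longrightarrow> condF z x = 1 - exp (x - z)"
  by (simp add: condF_def expF_def diff_divide_distrib flip: exp_diff)

lemma osf_eq_exp:
  assumes "0 \<le> x" "x \<le> z"
  shows "osf n j z x =
    real j * real (n choose j) * (1 - exp (x - z)) ^ (j - 1) * exp (x - z) * exp (x - z) ^ (n - j)"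
  using assms by (simp add: osf_def condF_eq_exp condf_eq_exp)

lemma integrable_osf: "0 \<le> x \<Longrightarrow> (\<lambda>z. osf n j z x) integrable_on {x..a}"
  by (rule integrable_spike_finite[of "{}", where f = "\<lambda>z. real j * real (n choose j)
        * (1 - exp (x - z)) ^ (j - 1) * exp (x - z) * exp (x - z) ^ (n - j)"])
     (auto simp: osf_eq_exp intro!: integrable_continuous_interval continuous_intros)

lemma has_real_derivative_prob_exactly_below_upper:
  assumes "0 \<le> x" "x \<le> z"
  shows "((\<lambda>a. prob_exactly_below n l a x) has_real_derivative
           osf n l z x - osf n (Suc l) z x) (at z)"
proof -
  have "((\<lambda>a. prob_exactly_below n l a x) has_real_derivative
      real (n choose l) * (real l * (1 - exp (x - z)) ^ (l - 1) * exp (x - z) * exp (x - z) ^ (n - l)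
      - (1 - exp (x - z)) ^ l * (real (n - l) * exp (x - z) ^ (n - l - 1) * exp (x - z)))) (at z)"
    unfolding prob_exactly_below_def
    by (rule derivative_eq_intros refl | simp)+ (simp add: algebra_simps)
  moreover have "real (Suc l) * real (n choose Suc l) = real (n - l) * real (n choose l)"
    by (metis binomial_absorb_comp binomial_absorption of_nat_mult)
  ultimately show ?thesis
    using assms by (simp add: osf_eq_exp algebra_simps)
qed

lemma osF_diff_eq_prob_exactly_below:
  assumes "0 \<le> x" "x \<le> a"
  shows "osF n l a x - osF n (Suc l) a x = prob_exactly_below n l a x"
proof -
  have "((\<lambda>z. osf n l z x - osf n (Suc l) z x) has_integral
          prob_exactly_below n l a x - prob_exactly_below n l x x) {x..a}"
  proof (rule fundamental_theorem_of_calculus[OF assms(2)])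
    fix z assume "z \<in> {x..a}"
    with assms(1) show "((\<lambda>a. prob_exactly_below n l a x) has_vector_derivative
        osf n l z x - osf n (Suc l) z x) (at z within {x..a})"
      by (simp add: has_real_derivative_iff_has_vector_derivative[symmetric]
          has_field_derivative_at_within has_real_derivative_prob_exactly_below_upper)
  qed
  then have "integral {x..a} (\<lambda>z. osf n l z x) - integral {x..a} (\<lambda>z. osf n (Suc l) z x)
      = prob_exactly_below n l a x - prob_exactly_below n l x x"
    using integral_diff[OF integrable_osf integrable_osf, OF assms(1) assms(1)] integral_unique
    by metis
  then show ?thesis
    using assms by (cases "l = 0") (simp_all add: osF_def osf_def prob_exactly_below_same)
qed

definition deriv_coeffs :: "nat \<Rightarrow> nat \<Rightarrow> (nat \<Rightarrow> real) \<Rightarrow> nat \<Rightarrow> real" where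
  "deriv_coeffs n l c j = (real n - real j) * (c j - (if j < l then c (Suc j) else 0))"

lemma deriv_coeffs_pow_Suc_scaled:
  assumes "n > 0"
  shows "(deriv_coeffs n l ^^ Suc m) c j / real n ^ Suc m =
    (1 - real j / real n) * ((deriv_coeffs n l ^^ m) c j / real n ^ m
      - (if j < l then (deriv_coeffs n l ^^ m) c (Suc j) / real n ^ m else 0))"
  using assms by (simp add: deriv_coeffs_def field_simps)

lemma deriv_coeffs_pow_scaled_tendsto:
  assumes "j \<le> l"
  shows "(\<lambda>n. (deriv_coeffs n l ^^ m) (indicator {l}) j / real n ^ m)
           \<longlonglongrightarrow> (-1) ^ (l - j) * real (m choose (l - j))"
  using assms
proof (induction m arbitrary: j)
  case 0
  then show ?case by (cases "j = l") (simp_all add: binomial_eq_0)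
next
  case (Suc m)
  let ?v = "\<lambda>n j. (deriv_coeffs n l ^^ m) (indicator {l}) j / real n ^ m"
  have shrink: "(\<lambda>n. 1 - real j / real n) \<longlonglongrightarrow> 1"
    using tendsto_diff[OF tendsto_const lim_const_over_n[of "real j"]] by simp
  have pascal: "(-1) ^ (l - j) * real (m choose (l - j))
      - (if j < l then (-1) ^ (l - Suc j) * real (m choose (l - Suc j)) else 0)
      = (-1) ^ (l - j) * real (Suc m choose (l - j))"
  proof (cases "j < l")
    case True
    then obtain t where "l - j = Suc t" "l - Suc j = t"
      by (metis Suc_diff_Suc diff_Suc_Suc)
    with True show ?thesis by (simp add: algebra_simps)
  qed (use Suc.prems in simp)
  have "(\<lambda>n. (1 - real j / real n) * (?v n j - (if j < l then ?v n (Suc j) else 0)))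
      \<longlonglongrightarrow> 1 * ((-1) ^ (l - j) * real (m choose (l - j))
            - (if j < l then (-1) ^ (l - Suc j) * real (m choose (l - Suc j)) else 0))"
    by (intro tendsto_intros shrink Suc.IH Suc.prems) (use Suc.prems Suc.IH[of "Suc j"] in auto)
  moreover have "\<forall>\<^sub>F n in sequentially.
      (1 - real j / real n) * (?v n j - (if j < l then ?v n (Suc j) else 0))
      = (deriv_coeffs n l ^^ Suc m) (indicator {l}) j / real n ^ Suc m"
    using eventually_gt_at_top[of 0]
    by eventually_elim (rule deriv_coeffs_pow_Suc_scaled[symmetric])
  ultimately show ?case
    unfolding pascal mult_1 by (rule Lim_transform_eventually)
qed

definition prob_exactly_below_comb :: "nat \<Rightarrow> nat \<Rightarrow> (nat \<Rightarrow> real) \<Rightarrow> real \<Rightarrow> real \<Rightarrow> real" where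
  "prob_exactly_below_comb n l c a x = (\<Sum>j\<le>l. c j * prob_exactly_below n j a x)"

lemma sum_atMost_shift_down:
  "(\<Sum>j\<le>l. if j = 0 then 0 else f j (j - 1)) = (\<Sum>i<l. f (Suc i) i)"
  by (induction l) auto

lemma has_real_derivative_prob_exactly_below_comb:
  "((\<lambda>x. prob_exactly_below_comb n l c a x) has_real_derivative
      prob_exactly_below_comb n l (deriv_coeffs n l c) a x) (at x)"
proof -
  let ?P = "\<lambda>j. prob_exactly_below n j a x"
  have "((\<lambda>x. prob_exactly_below_comb n l c a x) has_real_derivative
      (\<Sum>j\<le>l. c j * ((real n - real j) * ?P j
         - (if j = 0 then 0 else (real n - real (j - 1)) * ?P (j - 1))))) (at x)"
    unfolding prob_exactly_below_comb_def
    by (intro DERIV_sum DERIV_cmult has_real_derivative_prob_exactly_below)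
  also have "(\<Sum>j\<le>l. c j * ((real n - real j) * ?P j
         - (if j = 0 then 0 else (real n - real (j - 1)) * ?P (j - 1))))
      = (\<Sum>j\<le>l. (real n - real j) * c j * ?P j)
        - (\<Sum>j\<le>l. if j = 0 then 0 else c j * (real n - real (j - 1)) * ?P (j - 1))"
    by (simp add: algebra_simps sum_subtractf[symmetric] if_distrib cong: if_cong)
  also have "(\<Sum>j\<le>l. if j = 0 then 0 else c j * (real n - real (j - 1)) * ?P (j - 1))
      = (\<Sum>j\<le>l. (if j < l then (real n - real j) * c (Suc j) else 0) * ?P j)"
    by (subst sum_atMost_shift_down, rule sum.mono_neutral_cong_left) (auto simp: algebra_simps)
  also have "(\<Sum>j\<le>l. (real n - real j) * c j * ?P j) - \<dots>
      = prob_exactly_below_comb n l (deriv_coeffs n l c) a x"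
    unfolding prob_exactly_below_comb_def deriv_coeffs_def sum_subtractf[symmetric]
    by (rule sum.cong) (auto simp: algebra_simps)
  finally show ?thesis .
qed

lemma prob_exactly_below_comb_indicator:
  "prob_exactly_below_comb n l (indicator {l}) a x = prob_exactly_below n l a x"
  by (simp add: prob_exactly_below_comb_def indicator_def)

lemma prob_exactly_below_comb_same: "prob_exactly_below_comb n l c a a = c 0"
  by (induction l) (simp_all add: prob_exactly_below_comb_def prob_exactly_below_same)

theorem mainTheorem8:
  fixes a :: real and k m l :: nat
  assumes "a > 0" and "k \<ge> 1" and "m < k" and "l < k"
  shows "(\<lambda>n. (1 / real n ^ m) *
            left_deriv_n m (\<lambda>x. osF n l a x - osF n (l + 1) a x) a)
         \<longlonglongrightarrow> (-1) ^ l * real (m choose l)"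
proof -
  have "left_deriv_n m (\<lambda>x. osF n l a x - osF n (l + 1) a x) a
      = (deriv_coeffs n l ^^ m) (indicator {l}) 0" for n
  proof -
    have "left_deriv_n m (\<lambda>x. osF n l a x - osF n (l + 1) a x) a
        = left_deriv_n m (prob_exactly_below_comb n l (indicator {l}) a) a"
      using \<open>a > 0\<close>
      by (intro left_deriv_n_cong[of 0 a])
        (simp_all add: osF_diff_eq_prob_exactly_below prob_exactly_below_comb_indicator)
    also have "\<dots> = (deriv_coeffs n l ^^ m) (indicator {l}) 0"
      by (simp add: prob_exactly_below_comb_same left_deriv_n_linear_family
          [where \<Phi> = "\<lambda>c. prob_exactly_below_comb n l c a",
           OF has_real_derivative_prob_exactly_below_comb])
    finally show ?thesis .
  qed
  then show ?thesis
    using deriv_coeffs_pow_scaled_tendsto[of 0 l m] by simp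
qed

end
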